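(* Let $(G,\sigma)$ be a vertex-oriented 4-regular plane graph and let $v$ be a cut-vertex of $G$ that is not a loop-anchor, such that $G-v$ has exactly two components $H_1,H_2$, and such that $v$ is oriented transversely by $\sigma$. For $i=1,2$, let $G_i$ be the graph obtained from $H_i$ by adding a new edge joining the endpoints in $H_i$ of the two edges from $v$ to $H_i$ (a loop if these endpoints coincide), and let $\sigma_i$ be the vertex-orientation of $G_i$ obtained from $\sigma$ by letting the new edge take the place of the edges from $v$ (this is the graph obtained by "smoothing" $v$). Let $k\ge 2$. If $(G_1,\sigma_1)$ and $(G_2,\sigma_2)$ admit $k$-o-colourings, then $(G,\sigma)$ admits a $k$-o-colouring.
   Context: Graphs may have loops and multiple edges. A 4-regular plane graph has a fixed planar embedding giving a cyclic (embedding) order of the four edge-ends at each vertex. A loop-anchor is a vertex incident with a loop. Orientation of a vertex $v$: if $v$ has no loop, a partition of its four edges into two cells of two edges, each cell consisting of two edges consecutive in the embedding order at $v$; if $v$ has exactly one loop $e$ and other edges $f,g$, either the transverse orientation $\{\{e,f\},\{e,g\}\}$ or the nontransverse orientation $\{\{f,g\},\{e\}\}$; if $v$ has two loops $e_1,e_2$, the single (transverse) orientation $\{\{e_1,e_2\}\}$. A vertex-orientation assigns an orientation to each vertex. For a cut-vertex $v$ that is not a loop-anchor with $G-v$ having components $H_1,H_2$, each $H_i$ is joined to $v$ by exactly two edges, which are consecutive in the embedding order at $v$; the orientation of $v$ is nontransverse if its cells are these two pairs, and transverse otherwise. An o-colouring of $(G,\sigma)$ is an assignment of colours to edges such that at every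 vertex $v$ exactly two distinct colours appear on its incident edges and each cell of $\sigma(v)$ contains edges of both colours; a $k$-o-colouring uses at most $k$ colours. *)

theory Defs
  imports Main
begin

text \<open>
Multigraphs with loops: vertex set V, edge set E, and for every edge e its two
ends, ends e True and ends e False (a loop has both ends at the same vertex).  The embedding is given combinatorially by a
rotation system rot, a permutation of the darts which at every vertex is a single
cyclic permutation of the darts at that vertex (the embedding order).  Faces are
the orbits of rot composed with the dart flip; the embedding is plane iff Euler's
formula V - E + F = 2 (number of components) holds.
\<close>

definition darts :: "'e set \<Rightarrow> ('e \<times> bool) set" where
  "darts E = E \<times> UNIV"

definition dart_vertex :: "('e \<Rightarrow> bool \<Rightarrow> 'v) \<Rightarrow> 'e \<times> bool \<Rightarrow> 'v" where
  "dart_vertex ends d = ends (fst d) (snd d)"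

definition darts_at :: "'e set \<Rightarrow> ('e \<Rightarrow> bool \<Rightarrow> 'v) \<Rightarrow> 'v \<Rightarrow> ('e \<times> bool) set" where
  "darts_at E ends v = {d \<in> darts E. dart_vertex ends d = v}"

definition flip :: "'e \<times> bool \<Rightarrow> 'e \<times> bool" where
  "flip d = (fst d, \<not> snd d)"

definition incident :: "'e set \<Rightarrow> ('e \<Rightarrow> bool \<Rightarrow> 'v) \<Rightarrow> 'v \<Rightarrow> 'e set" where
  "incident E ends v = {e \<in> E. \<exists>b. ends e b = v}"

definition loops_at :: "'e set \<Rightarrow> ('e \<Rightarrow> bool \<Rightarrow> 'v) \<Rightarrow> 'v \<Rightarrow> 'e set" where
  "loops_at E ends v = {e \<in> E. ends e True = v \<and> ends e False = v}"

definition is_graph :: "'v set \<Rightarrow> 'e set \<Rightarrow> ('e \<Rightarrow> bool \<Rightarrow> 'v) \<Rightarrow> bool" where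
  "is_graph V E ends \<longleftrightarrow> finite V \<and> finite E \<and> (\<forall>e\<in>E. \<forall>b. ends e b \<in> V)"

definition four_regular :: "'v set \<Rightarrow> 'e set \<Rightarrow> ('e \<Rightarrow> bool \<Rightarrow> 'v) \<Rightarrow> bool" where
  "four_regular V E ends \<longleftrightarrow> (\<forall>v\<in>V. card (darts_at E ends v) = 4)"

definition conn_rel :: "'e set \<Rightarrow> ('e \<Rightarrow> bool \<Rightarrow> 'v) \<Rightarrow> ('v \<times> 'v) set" where
  "conn_rel E' ends = {(ends e True, ends e False) | e. e \<in> E'} \<union> {(ends e False, ends e True) | e. e \<in> E'}"

definition components :: "'v set \<Rightarrow> 'e set \<Rightarrow> ('e \<Rightarrow> bool \<Rightarrow> 'v) \<Rightarrow> 'v set set" where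
  "components V' E' ends = (\<lambda>u. {w \<in> V'. (u, w) \<in> (conn_rel E' ends)\<^sup>*}) ` V'"

definition components_del :: "'v set \<Rightarrow> 'e set \<Rightarrow> ('e \<Rightarrow> bool \<Rightarrow> 'v) \<Rightarrow> 'v \<Rightarrow> 'v set set" where
  "components_del V E ends v = components (V - {v}) (E - incident E ends v) ends"

definition cut_vertex :: "'v set \<Rightarrow> 'e set \<Rightarrow> ('e \<Rightarrow> bool \<Rightarrow> 'v) \<Rightarrow> 'v \<Rightarrow> bool" where
  "cut_vertex V E ends v \<longleftrightarrow> v \<in> V \<and>
     card (components_del V E ends v) > card (components V E ends)"

definition rotation_system :: "'v set \<Rightarrow> 'e set \<Rightarrow> ('e \<Rightarrow> bool \<Rightarrow> 'v)
    \<Rightarrow> ('e \<times> bool \<Rightarrow> 'e \<times> bool) \<Rightarrow> bool" where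
  "rotation_system V E ends rot \<longleftrightarrow>
     bij_betw rot (darts E) (darts E) \<and>
     (\<forall>d \<in> darts E. dart_vertex ends (rot d) = dart_vertex ends d) \<and>
     (\<forall>d \<in> darts E. darts_at E ends (dart_vertex ends d) = {(rot ^^ n) d | n. True})"

definition faces :: "'e set \<Rightarrow> ('e \<times> bool \<Rightarrow> 'e \<times> bool) \<Rightarrow> ('e \<times> bool) set set" where
  "faces E rot = (\<lambda>d. {((rot \<circ> flip) ^^ n) d | n. True}) ` darts E"

definition plane :: "'v set \<Rightarrow> 'e set \<Rightarrow> ('e \<Rightarrow> bool \<Rightarrow> 'v)
    \<Rightarrow> ('e \<times> bool \<Rightarrow> 'e \<times> bool) \<Rightarrow> bool" where
  "plane V E ends rot \<longleftrightarrow>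
     int (card V) - int (card E) + int (card (faces E rot)) = 2 * int (card (components V E ends))"

definition plane_4reg :: "'v set \<Rightarrow> 'e set \<Rightarrow> ('e \<Rightarrow> bool \<Rightarrow> 'v)
    \<Rightarrow> ('e \<times> bool \<Rightarrow> 'e \<times> bool) \<Rightarrow> bool" where
  "plane_4reg V E ends rot \<longleftrightarrow> is_graph V E ends \<and> four_regular V E ends \<and>
     rotation_system V E ends rot \<and> plane V E ends rot"

definition consecutive_pair :: "'e set \<Rightarrow> ('e \<Rightarrow> bool \<Rightarrow> 'v)
    \<Rightarrow> ('e \<times> bool \<Rightarrow> 'e \<times> bool) \<Rightarrow> 'v \<Rightarrow> 'e set \<Rightarrow> bool" where
  "consecutive_pair E ends rot v A \<longleftrightarrow>
     card A = 2 \<and> (\<exists>d \<in> darts_at E ends v. A = {fst d, fst (rot d)})"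

definition is_orientation :: "'e set \<Rightarrow> ('e \<Rightarrow> bool \<Rightarrow> 'v)
    \<Rightarrow> ('e \<times> bool \<Rightarrow> 'e \<times> bool) \<Rightarrow> 'v \<Rightarrow> 'e set set \<Rightarrow> bool" where
  "is_orientation E ends rot v c \<longleftrightarrow>
     (loops_at E ends v = {} \<and>
        (\<exists>A B. c = {A, B} \<and> A \<inter> B = {} \<and> A \<union> B = incident E ends v \<and>
               consecutive_pair E ends rot v A \<and> consecutive_pair E ends rot v B))
   \<or> (\<exists>e f g. loops_at E ends v = {e} \<and> incident E ends v = {e, f, g} \<and> distinct [e, f, g] \<and>
        (c = {{e, f}, {e, g}} \<or> c = {{f, g}, {e}}))
   \<or> (\<exists>e1 e2. e1 \<noteq> e2 \<and> loops_at E ends v = {e1, e2} \<and> c = {{e1, e2}})"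

definition vertex_orientation :: "'v set \<Rightarrow> 'e set \<Rightarrow> ('e \<Rightarrow> bool \<Rightarrow> 'v)
    \<Rightarrow> ('e \<times> bool \<Rightarrow> 'e \<times> bool) \<Rightarrow> ('v \<Rightarrow> 'e set set) \<Rightarrow> bool" where
  "vertex_orientation V E ends rot \<sigma> \<longleftrightarrow> (\<forall>v\<in>V. is_orientation E ends rot v (\<sigma> v))"

text \<open>o-colourings, stated for an incidence structure: vertex set V, edge set E,
  incidence map inc (edges incident with a vertex) and cells \<sigma>.\<close>

definition o_colouring :: "'v set \<Rightarrow> 'e set \<Rightarrow> ('v \<Rightarrow> 'e set) \<Rightarrow> ('v \<Rightarrow> 'e set set)
    \<Rightarrow> ('e \<Rightarrow> 'c) \<Rightarrow> bool" where
  "o_colouring V E inc \<sigma> col \<longleftrightarrow>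
     (\<forall>v\<in>V. card (col ` inc v) = 2 \<and> (\<forall>C\<in>\<sigma> v. \<exists>x\<in>C. \<exists>y\<in>C. col x \<noteq> col y))"

definition k_o_colourable :: "nat \<Rightarrow> 'v set \<Rightarrow> 'e set \<Rightarrow> ('v \<Rightarrow> 'e set) \<Rightarrow> ('v \<Rightarrow> 'e set set) \<Rightarrow> bool" where
  "k_o_colourable k V E inc \<sigma> \<longleftrightarrow>
     (\<exists>col :: 'e \<Rightarrow> nat. o_colouring V E inc \<sigma> col \<and> card (col ` E) \<le> k)"

definition edges_to :: "'e set \<Rightarrow> ('e \<Rightarrow> bool \<Rightarrow> 'v) \<Rightarrow> 'v \<Rightarrow> 'v set \<Rightarrow> 'e set" where
  "edges_to E ends v H = {e \<in> incident E ends v. \<exists>b. ends e b \<in> H}"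

definition transverse_cut :: "'e set \<Rightarrow> ('e \<Rightarrow> bool \<Rightarrow> 'v) \<Rightarrow> ('v \<Rightarrow> 'e set set)
    \<Rightarrow> 'v \<Rightarrow> 'v set \<Rightarrow> 'v set \<Rightarrow> bool" where
  "transverse_cut E ends \<sigma> v H1 H2 \<longleftrightarrow> \<sigma> v \<noteq> {edges_to E ends v H1, edges_to E ends v H2}"

text \<open>Smoothing v towards component H: the graph G_H has vertex set H, the edges of G
  with both ends in H (tagged Some e) and one new edge None, which replaces the two edges
  from v to H; in particular None is incident with exactly the endpoints in H of these
  two edges (a loop if they coincide).\<close>

definition smooth_map :: "'e set \<Rightarrow> 'e \<Rightarrow> 'e option" where
  "smooth_map P e = (if e \<in> P then None else Some e)"

definition smooth_E :: "'e set \<Rightarrow> ('e \<Rightarrow> bool \<Rightarrow> 'v) \<Rightarrow> 'v set \<Rightarrow> 'e option set" where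
  "smooth_E E ends H = insert None (Some ` {e \<in> E. ends e True \<in> H \<and> ends e False \<in> H})"

definition smooth_inc :: "'e set \<Rightarrow> ('e \<Rightarrow> bool \<Rightarrow> 'v) \<Rightarrow> 'v \<Rightarrow> 'v set \<Rightarrow> 'v \<Rightarrow> 'e option set" where
  "smooth_inc E ends v H u = smooth_map (edges_to E ends v H) ` incident E ends u"

definition smooth_sigma :: "'e set \<Rightarrow> ('e \<Rightarrow> bool \<Rightarrow> 'v) \<Rightarrow> ('v \<Rightarrow> 'e set set) \<Rightarrow> 'v \<Rightarrow> 'v set
    \<Rightarrow> 'v \<Rightarrow> 'e option set set" where
  "smooth_sigma E ends \<sigma> v H u = (\<lambda>C. smooth_map (edges_to E ends v H) ` C) ` \<sigma> u"

end

theory Submission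
  imports Defs
begin

text \<open>
  Every
  component of G - v is attached to v, and by the handshake argument each side receives
  an even number of the four edges at v; hence exactly two edges join v to each side.
  Given o-colourings c of the smoothed graph on H and c' of the smoothed graph on H', we
  recolour c' injectively so that all colours lie in a common palette of size k and the
  new edge of H' gets a colour different from that of the new edge of H.  Colouring each
  edge of G by the colouring of the side it touches (the two edges to H inherit the colour
  of the new edge of H, and similarly for H') is then an o-colouring: at vertices of a
  side nothing changes up to an injective renaming, and at v the two colours are
  distinct and, since v is transverse, every cell contains an edge to each side.
\<close>

definition o_vertex :: "('v \<Rightarrow> 'e set) \<Rightarrow> ('v \<Rightarrow> 'e set set) \<Rightarrow> ('e \<Rightarrow> 'c) \<Rightarrow> 'v \<Rightarrow> bool" where
  "o_vertex inc \<sigma> col u \<longleftrightarrow>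
     card (col ` inc u) = 2 \<and> (\<forall>C\<in>\<sigma> u. \<exists>x\<in>C. \<exists>y\<in>C. col x \<noteq> col y)"

lemma o_colouring_iff_o_vertex:
  "o_colouring V E inc \<sigma> col \<longleftrightarrow> (\<forall>u\<in>V. o_vertex inc \<sigma> col u)"
  unfolding o_colouring_def o_vertex_def by blast

text \<open>The local condition is preserved when edges are renamed by m and colours by a map
  \<pi> that is injective on the colours at u; this is how a colouring of a smoothed side
  transfers back to the vertices of that side.\<close>
lemma o_vertex_transfer:
  fixes m :: "'e \<Rightarrow> 'f" and c :: "'f \<Rightarrow> 'c" and \<pi> :: "'c \<Rightarrow> 'd"
  assumes ok: "o_vertex (\<lambda>u. m ` inc u) (\<lambda>u. (\<lambda>C. m ` C) ` \<sigma> u) c u"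
    and inj: "inj_on \<pi> (c ` m ` inc u)"
    and cells: "\<forall>C\<in>\<sigma> u. C \<subseteq> inc u"
    and col: "\<forall>e\<in>inc u. col e = \<pi> (c (m e))"
  shows "o_vertex inc \<sigma> col u"
proof -
  have colours: "col ` inc u = \<pi> ` c ` m ` inc u"
    using col by (force simp: image_iff)
  have "card (col ` inc u) = 2"
    using ok unfolding o_vertex_def colours card_image[OF inj] by simp
  moreover have "\<exists>x\<in>C. \<exists>y\<in>C. col x \<noteq> col y" if C: "C \<in> \<sigma> u" for C
  proof -
    obtain x y where xy: "x \<in> C" "y \<in> C" "c (m x) \<noteq> c (m y)"
      using ok C unfolding o_vertex_def by fastforce
    have "x \<in> inc u" "y \<in> inc u" using xy cells C by blast+
    then have "\<pi> (c (m x)) \<noteq> \<pi> (c (m y))"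
      using xy(3) inj unfolding inj_on_def by blast
    with xy \<open>x \<in> inc u\<close> \<open>y \<in> inc u\<close> col show ?thesis by metis
  qed
  ultimately show ?thesis unfolding o_vertex_def by blast
qed

definition boundary :: "'e set \<Rightarrow> ('e \<Rightarrow> bool \<Rightarrow> 'v) \<Rightarrow> 'v set \<Rightarrow> 'e set" where
  "boundary E ends H = {e \<in> E. \<exists>b. ends e b \<in> H \<and> ends e (\<not> b) \<notin> H}"

lemma card_darts_in:
  assumes "finite E" "finite H"
  shows "card {d \<in> darts E. dart_vertex ends d \<in> H} = (\<Sum>u\<in>H. card (darts_at E ends u))"
proof -
  have "{d \<in> darts E. dart_vertex ends d \<in> H} = (\<Union>u\<in>H. darts_at E ends u)"
    unfolding darts_at_def by auto
  moreover have "\<forall>u\<in>H. finite (darts_at E ends u)"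
    using assms(1) unfolding darts_at_def darts_def by auto
  moreover have "\<forall>u\<in>H. \<forall>w\<in>H. u \<noteq> w \<longrightarrow> darts_at E ends u \<inter> darts_at E ends w = {}"
    unfolding darts_at_def by auto
  ultimately show ?thesis using card_UN_disjoint[OF assms(2), of "darts_at E ends"] by simp
qed

text \<open>Handshake parity: if every vertex of H has even degree, an even number of edges
  leave H.  The darts at H are the two darts of each edge inside H plus one dart of each
  boundary edge.\<close>
lemma even_boundary:
  assumes fE: "finite E" and fH: "finite H"
    and even_deg: "\<forall>u\<in>H. even (card (darts_at E ends u))"
  shows "even (card (boundary E ends H))"
proof -
  define D where "D = {d \<in> darts E. dart_vertex ends d \<in> H}"
  define I where "I = {e \<in> E. \<forall>b. ends e b \<in> H}"
  define Q where "Q = {d \<in> D. fst d \<in> boundary E ends H}"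
  have even_D: "even (card D)"
    using card_darts_in[OF fE fH] even_deg unfolding D_def by (simp add: dvd_sum)
  have split: "D = (I \<times> UNIV) \<union> Q"
  proof (intro set_eqI iffI)
    fix d assume "d \<in> D"
    then obtain e b where "d = (e, b)" "e \<in> E" "ends e b \<in> H"
      unfolding D_def darts_def dart_vertex_def by auto
    show "d \<in> (I \<times> UNIV) \<union> Q"
    proof (cases "ends e (\<not> b) \<in> H")
      case True
      then have "\<forall>c. ends e c \<in> H" using \<open>ends e b \<in> H\<close> by (cases b) (auto intro: bool_induct)
      then show ?thesis using \<open>d = (e, b)\<close> \<open>e \<in> E\<close> unfolding I_def by auto
    next
      case False
      then show ?thesis using \<open>d = (e, b)\<close> \<open>d \<in> D\<close> \<open>e \<in> E\<close> \<open>ends e b \<in> H\<close>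
        unfolding Q_def boundary_def by auto
    qed
  qed (auto simp: D_def I_def Q_def darts_def dart_vertex_def)
  have disjoint: "(I \<times> UNIV) \<inter> Q = {}"
    unfolding I_def Q_def boundary_def by auto
  have fD: "finite D" using fE unfolding D_def darts_def by auto
  have "bij_betw fst Q (boundary E ends H)"
  proof (rule bij_betw_imageI)
    show "inj_on fst Q"
    proof (rule inj_onI)
      fix d d' assume d: "d \<in> Q" "d' \<in> Q" "fst d = fst d'"
      obtain e b c where eq: "d = (e, b)" "d' = (e, c)" using d(3) by (metis prod.collapse)
      have "ends e b \<in> H" "ends e c \<in> H" "\<exists>a. ends e a \<notin> H"
        using d eq unfolding Q_def D_def boundary_def dart_vertex_def by auto
      then have "b = c" by (cases b; cases c) (auto intro: bool_induct)
      then show "d = d'" using eq by simp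
    qed
    show "fst ` Q = boundary E ends H"
      unfolding Q_def D_def darts_def dart_vertex_def boundary_def by force
  qed
  then have "card Q = card (boundary E ends H)" by (rule bij_betw_same_card)
  moreover have "card D = 2 * card I + card Q"
    using fD split disjoint card_Un_disjoint[of "I \<times> UNIV" Q]
    by (simp add: card_cartesian_product)
  ultimately show ?thesis using even_D by simp
qed

lemma conn_rel_rtrancl_sym:
  "(x, y) \<in> (conn_rel E ends)\<^sup>* \<Longrightarrow> (y, x) \<in> (conn_rel E ends)\<^sup>*"
proof -
  have "sym (conn_rel E ends)" unfolding sym_def conn_rel_def by blast
  then have "sym ((conn_rel E ends)\<^sup>*)" by (rule sym_rtrancl)
  then show "(x, y) \<in> (conn_rel E ends)\<^sup>* \<Longrightarrow> (y, x) \<in> (conn_rel E ends)\<^sup>*"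
    unfolding sym_def by blast
qed

lemma component_subset: "K \<in> components V E ends \<Longrightarrow> K \<subseteq> V"
  unfolding components_def by auto

lemma in_some_component: "u \<in> V \<Longrightarrow> \<exists>K\<in>components V E ends. u \<in> K"
  unfolding components_def by auto

lemma components_overlap_eq:
  assumes "K \<in> components V E ends" "K' \<in> components V E ends" "x \<in> K" "x \<in> K'"
  shows "K = K'"
proof -
  obtain u where u: "K = {w \<in> V. (u, w) \<in> (conn_rel E ends)\<^sup>*}"
    using assms(1) unfolding components_def by auto
  obtain u' where u': "K' = {w \<in> V. (u', w) \<in> (conn_rel E ends)\<^sup>*}"
    using assms(2) unfolding components_def by auto
  have "(u, u') \<in> (conn_rel E ends)\<^sup>*"
    using assms u u' conn_rel_rtrancl_sym[of u' x] by (auto intro: rtrancl_trans)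
  with conn_rel_rtrancl_sym[OF this] show ?thesis
    using u u' by (auto intro: rtrancl_trans)
qed

lemma component_edge_closed:
  assumes "K \<in> components V E ends" "\<forall>e\<in>E. \<forall>b. ends e b \<in> V"
    and "e \<in> E" "ends e b \<in> K"
  shows "ends e c \<in> K"
proof -
  obtain u where u: "K = {w \<in> V. (u, w) \<in> (conn_rel E ends)\<^sup>*}"
    using assms(1) unfolding components_def by auto
  have "(ends e b, ends e c) \<in> conn_rel E ends \<or> b = c"
    using assms(3) unfolding conn_rel_def by (cases b; cases c) auto
  then have "(ends e b, ends e c) \<in> (conn_rel E ends)\<^sup>*" by auto
  then show ?thesis using assms u by (auto intro: rtrancl_trans)
qed

lemma card_incident_loopless:
  assumes "finite E" "loops_at E ends v = {}"
  shows "card (incident E ends v) = card (darts_at E ends v)"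
proof -
  have "inj_on fst (darts_at E ends v)"
  proof (rule inj_onI)
    fix d d' assume d: "d \<in> darts_at E ends v" "d' \<in> darts_at E ends v" "fst d = fst d'"
    obtain e b c where eq: "d = (e, b)" "d' = (e, c)" using d(3) by (metis prod.collapse)
    have "e \<in> E" "ends e b = v" "ends e c = v"
      using d eq unfolding darts_at_def darts_def dart_vertex_def by auto
    then have "b = c" using assms(2) unfolding loops_at_def by (cases b; cases c) auto
    then show "d = d'" using eq by simp
  qed
  moreover have "fst ` darts_at E ends v = incident E ends v"
    unfolding darts_at_def darts_def dart_vertex_def incident_def by force
  ultimately show ?thesis by (metis card_image)
qed

lemma palette_merge:
  fixes S1 S2 :: "nat set"
  assumes "finite S1" "finite S2" "card S1 \<le> k" "card S2 \<le> k" "k \<ge> 2" "\<alpha> \<in> S1"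
  shows "\<exists>\<pi> T. S1 \<subseteq> T \<and> finite T \<and> card T \<le> k \<and> \<pi> ` S2 \<subseteq> T \<and> inj_on \<pi> S2 \<and> \<pi> \<beta> \<noteq> \<alpha>"
proof -
  obtain B where B: "finite B" "card B = k - card S1" "S1 \<inter> B = {}"
    using finite_arbitrarily_large_disj[of S1 "k - card S1"] assms(1) by auto
  define T where "T = S1 \<union> B"
  have fT: "finite T" and cT: "card T = k" and aT: "\<alpha> \<in> T"
    using B assms card_Un_disjoint[of S1 B] unfolding T_def by auto
  obtain g where g: "g ` S2 \<subseteq> T" "inj_on g S2"
    using card_le_inj[OF assms(2) fT] cT assms(4) by auto
  obtain \<gamma> where \<gamma>: "\<gamma> \<in> T" "\<gamma> \<noteq> \<alpha>"
  proof -
    have "card (T - {\<alpha>}) \<ge> 1" using card_Diff_singleton[OF aT] cT assms(5) by simp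
    then have "T - {\<alpha>} \<noteq> {}" by (metis card.empty not_one_le_zero)
    then show ?thesis using that by blast
  qed
  define swap where "swap x = (if x = \<alpha> then \<gamma> else if x = \<gamma> then \<alpha> else x)" for x
  define h where "h = (if g \<beta> = \<alpha> then swap \<circ> g else g)"
  have "h ` S2 \<subseteq> T" using g \<gamma> aT unfolding h_def swap_def by auto
  moreover have "inj_on h S2"
    using g(2) \<gamma> unfolding h_def swap_def inj_on_def by auto
  moreover have "h \<beta> \<noteq> \<alpha>" using \<gamma> unfolding h_def swap_def by auto
  moreover have "S1 \<subseteq> T" unfolding T_def by blast
  ultimately show ?thesis using fT cT by blast
qed

lemma orientation_cells_incident:
  "is_orientation E ends rot u c \<Longrightarrow> C \<in> c \<Longrightarrow> C \<subseteq> incident E ends u"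
  unfolding is_orientation_def loops_at_def incident_def by blast

lemma two_cells_match:
  assumes "X \<union> Y = P \<union> P'" "X \<inter> Y = {}" "P \<inter> P' = {}"
    and "card X = 2" "card P' = 2" "X \<subseteq> P'"
  shows "X = P' \<and> Y = P"
proof -
  have "finite P'" using assms(5) by (metis card.infinite zero_neq_numeral)
  then have "X = P'" using card_subset_eq assms(4-6) by metis
  then show ?thesis using assms(1-3) by blast
qed

lemma transverse_cells_meet_both:
  assumes cells: "c = {A, B}" "A \<inter> B = {}" "A \<union> B = P \<union> P'" "card A = 2" "card B = 2"
    and sides: "P \<inter> P' = {}" "card P = 2" "card P' = 2"
    and transverse: "c \<noteq> {P, P'}"
    and "C \<in> c"
  shows "C \<inter> P \<noteq> {} \<and> C \<inter> P' \<noteq> {}"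
proof -
  obtain D where D: "c = {C, D}" "C \<union> D = P \<union> P'" "C \<inter> D = {}" "card C = 2"
    using cells \<open>C \<in> c\<close> by (auto simp: insert_commute Un_commute Int_commute)
  have "C \<inter> P \<noteq> {}"
  proof
    assume "C \<inter> P = {}"
    then have "C \<subseteq> P'" using D(2) by blast
    then have "C = P' \<and> D = P" using two_cells_match[OF D(2,3) sides(1) D(4) sides(3)] by blast
    then show False using D(1) transverse by (auto simp: insert_commute)
  qed
  moreover have "C \<inter> P' \<noteq> {}"
  proof
    assume "C \<inter> P' = {}"
    then have "C \<subseteq> P" using D(2) by blast
    moreover have "C \<union> D = P' \<union> P" "P' \<inter> P = {}" using D(2) sides(1) by blast+
    ultimately have "C = P \<and> D = P'" using two_cells_match D(3,4) sides(2) by blast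
    then show False using D(1) transverse by simp
  qed
  ultimately show ?thesis ..
qed

locale cut_side =
  fixes V :: "'v set" and E :: "'e set" and ends :: "'e \<Rightarrow> bool \<Rightarrow> 'v"
    and v :: 'v and H H' :: "'v set"
  assumes graph: "is_graph V E ends"
    and regular: "four_regular V E ends"
    and cut: "cut_vertex V E ends v"
    and loopless_at_cut: "loops_at E ends v = {}"
    and sides: "components_del V E ends v = {H, H'}"
    and sides_distinct: "H \<noteq> H'"
begin

lemma swapped: "cut_side V E ends v H' H"
  by (rule cut_side.intro)
    (use graph regular cut loopless_at_cut sides sides_distinct in \<open>auto simp: insert_commute\<close>)

lemma ends_in_V: "e \<in> E \<Longrightarrow> ends e b \<in> V"
  using graph unfolding is_graph_def by blast

lemma cut_in_V: "v \<in> V"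
  using cut unfolding cut_vertex_def by blast

lemma deleted_graph: "\<forall>e\<in>E - incident E ends v. \<forall>b. ends e b \<in> V - {v}"
  using ends_in_V unfolding incident_def by blast

lemma side_components:
  "H \<in> components (V - {v}) (E - incident E ends v) ends"
  "H' \<in> components (V - {v}) (E - incident E ends v) ends"
  using sides unfolding components_del_def by simp_all

lemma sides_subset: "H \<union> H' \<subseteq> V - {v}"
  by (rule Un_least[OF component_subset[OF side_components(1)] component_subset[OF side_components(2)]])

lemma sides_disjoint: "H \<inter> H' = {}"
proof (rule ccontr)
  assume "H \<inter> H' \<noteq> {}"
  then obtain x where "x \<in> H" "x \<in> H'" by blast
  then have "H = H'" by (rule components_overlap_eq[OF side_components])
  with sides_distinct show False ..
qed

lemma sides_cover: "V - {v} = H \<union> H'"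
proof
  show "V - {v} \<subseteq> H \<union> H'"
  proof
    fix u assume "u \<in> V - {v}"
    then obtain K where "K \<in> components_del V E ends v" "u \<in> K"
      using in_some_component[of u "V - {v}" "E - incident E ends v" ends]
      unfolding components_del_def by blast
    then show "u \<in> H \<union> H'" unfolding sides by blast
  qed
qed (rule sides_subset)

lemma edge_closed:
  assumes "e \<in> E" "e \<notin> incident E ends v" "ends e b \<in> H"
  shows "ends e c \<in> H"
  using component_edge_closed[OF side_components(1) deleted_graph] assms by simp

lemma cut_edge_other_end:
  assumes "e \<in> E" "ends e b = v"
  shows "ends e (\<not> b) \<in> H \<union> H'"
proof -
  have "ends e (\<not> b) \<noteq> v"
    using assms loopless_at_cut unfolding loops_at_def by (cases b) auto
  then show ?thesis using ends_in_V[OF assms(1)] sides_cover by blast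
qed

lemma edge_has_side:
  assumes "e \<in> E"
  shows "\<exists>b. ends e b \<in> H \<union> H'"
proof (cases "ends e True = v")
  case True
  then show ?thesis using cut_edge_other_end[OF assms] by blast
next
  case False
  then show ?thesis using ends_in_V[OF assms, of True] sides_cover by blast
qed

lemma no_crossing:
  assumes "e \<in> E" "ends e b \<in> H"
  shows "ends e c \<notin> H'"
proof (cases "e \<in> incident E ends v")
  case True
  then obtain d where d: "ends e d = v" unfolding incident_def by blast
  have "b \<noteq> d" using assms(2) d sides_subset by auto
  moreover have "ends e (\<not> d) \<in> H \<union> H'" using cut_edge_other_end[OF assms(1) d] .
  ultimately show ?thesis
    using assms d sides_disjoint sides_subset by (cases b; cases c; cases d) auto
next
  case False
  then show ?thesis using edge_closed[OF assms(1) False assms(2)] sides_disjoint by blast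
qed

text \<open>Since v is a cut vertex and G - v has only two components, every component of
  G - v is attached to v.\<close>
lemma edges_to_nonempty:
  assumes K: "K \<in> components_del V E ends v"
  shows "edges_to E ends v K \<noteq> {}"
proof
  assume detached: "edges_to E ends v K = {}"
  have Kc: "K \<in> components (V - {v}) (E - incident E ends v) ends"
    using K unfolding components_del_def .
  obtain u where u: "u \<in> V - {v}"
    "K = {w \<in> V - {v}. (u, w) \<in> (conn_rel (E - incident E ends v) ends)\<^sup>*}"
    using Kc unfolding components_def by auto
  have reach: "(u, w) \<in> (conn_rel E ends)\<^sup>* \<Longrightarrow> w \<in> K" for w
  proof (induction rule: rtrancl_induct)
    case base then show ?case using u by auto
  next
    case (step w x)
    then obtain e b where eb: "e \<in> E" "ends e b = w" "ends e (\<not> b) = x"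
      unfolding conn_rel_def by auto
    have "e \<notin> incident E ends v"
      using detached eb step.IH unfolding edges_to_def by auto
    then show ?case
      using component_edge_closed[OF Kc deleted_graph] eb step.IH by blast
  qed
  define Ku where "Ku = {w \<in> V. (u, w) \<in> (conn_rel E ends)\<^sup>*}"
  define Kv where "Kv = {w \<in> V. (v, w) \<in> (conn_rel E ends)\<^sup>*}"
  have "Ku \<in> components V E ends" "Kv \<in> components V E ends"
    using u cut_in_V unfolding Ku_def Kv_def components_def by auto
  moreover have "Ku \<noteq> Kv" using reach u cut_in_V unfolding Ku_def Kv_def by auto
  moreover have "finite (components V E ends)"
    using graph unfolding components_def is_graph_def by auto
  ultimately have "card {Ku, Kv} \<le> card (components V E ends)"
    by (intro card_mono) auto
  then have "2 \<le> card (components V E ends)" using \<open>Ku \<noteq> Kv\<close> by simp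
  moreover have "card (components_del V E ends v) = 2"
    using sides sides_distinct by simp
  ultimately show False using cut unfolding cut_vertex_def by simp
qed

lemma incident_cut_split:
  "incident E ends v = edges_to E ends v H \<union> edges_to E ends v H'"
  "edges_to E ends v H \<inter> edges_to E ends v H' = {}"
proof -
  have "e \<in> edges_to E ends v H \<union> edges_to E ends v H'" if e: "e \<in> incident E ends v" for e
  proof -
    obtain b where "e \<in> E" "ends e b = v" using e unfolding incident_def by blast
    then have "ends e (\<not> b) \<in> H \<union> H'" by (rule cut_edge_other_end)
    then show ?thesis using e unfolding edges_to_def by blast
  qed
  then show "incident E ends v = edges_to E ends v H \<union> edges_to E ends v H'"
    unfolding edges_to_def by blast
  have "e \<notin> edges_to E ends v H'" if e: "e \<in> edges_to E ends v H" for e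
  proof -
    obtain b where "e \<in> E" "ends e b \<in> H" using e unfolding edges_to_def incident_def by blast
    then have "\<forall>c. ends e c \<notin> H'" using no_crossing by blast
    then show ?thesis unfolding edges_to_def by blast
  qed
  then show "edges_to E ends v H \<inter> edges_to E ends v H' = {}" by blast
qed

lemma edges_to_is_boundary: "edges_to E ends v H = boundary E ends H"
proof (intro set_eqI iffI)
  fix e assume "e \<in> edges_to E ends v H"
  then obtain b d where "e \<in> E" "ends e d = v" "ends e b \<in> H"
    unfolding edges_to_def incident_def by blast
  moreover have "v \<notin> H" using sides_subset by blast
  ultimately have "ends e (\<not> b) = v" by (cases b; cases d) auto
  then show "e \<in> boundary E ends H"
    using \<open>e \<in> E\<close> \<open>ends e b \<in> H\<close> \<open>v \<notin> H\<close> unfolding boundary_def by blast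
next
  fix e assume "e \<in> boundary E ends H"
  then obtain b where b: "e \<in> E" "ends e b \<in> H" "ends e (\<not> b) \<notin> H"
    unfolding boundary_def by blast
  then have "e \<in> incident E ends v" using edge_closed[of e b "\<not> b"] by blast
  then show "e \<in> edges_to E ends v H" using b unfolding edges_to_def by blast
qed

text \<open>Parity: v has degree 4, both sides receive an edge, and H receives an even
  number of them; hence exactly two.\<close>
lemma card_edges_to: "card (edges_to E ends v H) = 2"
proof -
  have fE: "finite E" using graph unfolding is_graph_def by blast
  have "finite H" using sides_subset graph finite_subset unfolding is_graph_def by blast
  moreover have "\<forall>u\<in>H. even (card (darts_at E ends u))"
    using regular sides_subset unfolding four_regular_def by auto
  ultimately have even: "even (card (edges_to E ends v H))"
    using even_boundary[OF fE] edges_to_is_boundary by simp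
  have fin: "finite (edges_to E ends v H)" "finite (edges_to E ends v H')"
    using fE unfolding edges_to_def incident_def by auto
  have "card (incident E ends v) = 4"
    using card_incident_loopless[OF fE loopless_at_cut] regular cut_in_V
    unfolding four_regular_def by simp
  then have sum: "card (edges_to E ends v H) + card (edges_to E ends v H') = 4"
    using card_Un_disjoint[OF fin incident_cut_split(2)] incident_cut_split(1) by simp
  have "card (edges_to E ends v H) \<noteq> 0" "card (edges_to E ends v H') \<noteq> 0"
    using edges_to_nonempty[of H] edges_to_nonempty[of H'] sides fin by auto
  with sum even show ?thesis by (auto elim!: evenE)
qed

lemma smooth_map_into_smooth_E:
  assumes "e \<in> E" "ends e b \<in> H"
  shows "smooth_map (edges_to E ends v H) e \<in> smooth_E E ends H"
proof (cases "e \<in> edges_to E ends v H")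
  case False
  then have "e \<notin> incident E ends v" using assms unfolding edges_to_def by blast
  then have "\<forall>c. ends e c \<in> H" using edge_closed assms by blast
  then show ?thesis using False assms unfolding smooth_map_def smooth_E_def by auto
qed (simp add: smooth_map_def smooth_E_def)

lemma side_vertex_coloured:
  fixes c :: "'e option \<Rightarrow> 'c" and \<pi> :: "'c \<Rightarrow> 'd" and col :: "'e \<Rightarrow> 'd"
  assumes smooth_col: "o_colouring H (smooth_E E ends H) (smooth_inc E ends v H) (smooth_sigma E ends \<sigma> v H) c"
    and inj: "inj_on \<pi> (c ` smooth_E E ends H)"
    and cells: "\<forall>C\<in>\<sigma> u. C \<subseteq> incident E ends u"
    and col: "\<forall>e\<in>E. (\<exists>b. ends e b \<in> H) \<longrightarrow> col e = \<pi> (c (smooth_map (edges_to E ends v H) e))"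
    and u: "u \<in> H"
  shows "o_vertex (incident E ends) \<sigma> col u"
proof (rule o_vertex_transfer[where m = "smooth_map (edges_to E ends v H)" and c = c and \<pi> = \<pi>])
  show "o_vertex (\<lambda>u. smooth_map (edges_to E ends v H) ` incident E ends u)
          (\<lambda>u. (\<lambda>C. smooth_map (edges_to E ends v H) ` C) ` \<sigma> u) c u"
    using smooth_col u unfolding o_colouring_iff_o_vertex smooth_inc_def smooth_sigma_def by blast
  have "smooth_map (edges_to E ends v H) ` incident E ends u \<subseteq> smooth_E E ends H"
    using smooth_map_into_smooth_E u unfolding incident_def by blast
  then show "inj_on \<pi> (c ` smooth_map (edges_to E ends v H) ` incident E ends u)"
    by (intro inj_on_subset[OF inj] image_mono)
  show "\<forall>e\<in>incident E ends u. col e = \<pi> (c (smooth_map (edges_to E ends v H) e))"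
    using col u unfolding incident_def by blast
qed (rule cells)

lemma cut_vertex_coloured:
  assumes orient: "is_orientation E ends rot v (\<sigma> v)"
    and transverse: "transverse_cut E ends \<sigma> v H H'"
    and col: "\<forall>e\<in>edges_to E ends v H. col e = \<alpha>" "\<forall>e\<in>edges_to E ends v H'. col e = \<beta>"
    and "\<alpha> \<noteq> \<beta>"
  shows "o_vertex (incident E ends) \<sigma> col v"
proof -
  obtain A B where AB: "\<sigma> v = {A, B}" "A \<inter> B = {}" "A \<union> B = incident E ends v"
      "card A = 2" "card B = 2"
    using orient loopless_at_cut unfolding is_orientation_def consecutive_pair_def by auto
  have card_sides: "card (edges_to E ends v H) = 2" "card (edges_to E ends v H') = 2"
    using card_edges_to cut_side.card_edges_to[OF swapped] by auto
  have "edges_to E ends v H \<noteq> {}" "edges_to E ends v H' \<noteq> {}"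
    using card_sides by auto
  then have "col ` edges_to E ends v H = {\<alpha>}" "col ` edges_to E ends v H' = {\<beta>}"
    using col by auto
  then have "col ` incident E ends v = {\<alpha>, \<beta>}"
    unfolding incident_cut_split(1) image_Un by auto
  moreover have "\<exists>x\<in>C. \<exists>y\<in>C. col x \<noteq> col y" if "C \<in> \<sigma> v" for C
  proof -
    have "C \<inter> edges_to E ends v H \<noteq> {} \<and> C \<inter> edges_to E ends v H' \<noteq> {}"
      using transverse_cells_meet_both[OF AB(1,2) _ AB(4,5) incident_cut_split(2) card_sides]
        AB(3) incident_cut_split(1) transverse that unfolding transverse_cut_def by auto
    then obtain x y where "x \<in> C" "x \<in> edges_to E ends v H" "y \<in> C" "y \<in> edges_to E ends v H'"
      by blast
    then show ?thesis using col \<open>\<alpha> \<noteq> \<beta>\<close> by metis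
  qed
  ultimately show ?thesis using \<open>\<alpha> \<noteq> \<beta>\<close> unfolding o_vertex_def by simp
qed

definition glued :: "('e option \<Rightarrow> 'c) \<Rightarrow> ('e option \<Rightarrow> 'c) \<Rightarrow> 'e \<Rightarrow> 'c" where
  "glued c c' e = (if \<exists>b. ends e b \<in> H then c (smooth_map (edges_to E ends v H) e)
                   else c' (smooth_map (edges_to E ends v H') e))"

lemma glued_on_sides:
  "\<forall>e\<in>E. (\<exists>b. ends e b \<in> H) \<longrightarrow> glued c c' e = c (smooth_map (edges_to E ends v H) e)"
  "\<forall>e\<in>E. (\<exists>b. ends e b \<in> H') \<longrightarrow> glued c c' e = c' (smooth_map (edges_to E ends v H') e)"
  using cut_side.no_crossing[OF swapped] unfolding glued_def by auto

lemma glued_on_cut_edges: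
  "\<forall>e\<in>edges_to E ends v H. glued c c' e = c None"
  "\<forall>e\<in>edges_to E ends v H'. glued c c' e = c' None"
proof -
  have "glued c c' e = c None" if e: "e \<in> edges_to E ends v H" for e
  proof -
    have "e \<in> E" "\<exists>b. ends e b \<in> H" using e unfolding edges_to_def incident_def by auto
    then have "glued c c' e = c (smooth_map (edges_to E ends v H) e)" using glued_on_sides(1) by blast
    then show ?thesis using e by (simp add: smooth_map_def)
  qed
  moreover have "glued c c' e = c' None" if e: "e \<in> edges_to E ends v H'" for e
  proof -
    have "e \<in> E" "\<exists>b. ends e b \<in> H'" using e unfolding edges_to_def incident_def by auto
    then have "glued c c' e = c' (smooth_map (edges_to E ends v H') e)" using glued_on_sides(2) by blast
    then show ?thesis using e by (simp add: smooth_map_def)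
  qed
  ultimately show "\<forall>e\<in>edges_to E ends v H. glued c c' e = c None"
    "\<forall>e\<in>edges_to E ends v H'. glued c c' e = c' None" by blast+
qed

lemma glued_colours: "glued c c' ` E \<subseteq> c ` smooth_E E ends H \<union> c' ` smooth_E E ends H'"
proof
  fix x assume "x \<in> glued c c' ` E"
  then obtain e where e: "e \<in> E" "x = glued c c' e" by blast
  then consider b where "ends e b \<in> H" | b where "ends e b \<in> H'" using edge_has_side by blast
  then show "x \<in> c ` smooth_E E ends H \<union> c' ` smooth_E E ends H'"
  proof cases
    case 1
    then show ?thesis using e glued_on_sides(1) smooth_map_into_smooth_E by blast
  next
    case 2
    then show ?thesis
      using e glued_on_sides(2) cut_side.smooth_map_into_smooth_E[OF swapped e(1) 2] by blast
  qed
qed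

lemma glued_o_colouring:
  fixes c :: "'e option \<Rightarrow> 'c" and c' :: "'e option \<Rightarrow> 'd" and \<pi> :: "'d \<Rightarrow> 'c"
  assumes orient: "vertex_orientation V E ends rot \<sigma>"
    and transverse: "transverse_cut E ends \<sigma> v H H'"
    and col: "o_colouring H (smooth_E E ends H) (smooth_inc E ends v H) (smooth_sigma E ends \<sigma> v H) c"
    and col': "o_colouring H' (smooth_E E ends H') (smooth_inc E ends v H') (smooth_sigma E ends \<sigma> v H') c'"
    and inj: "inj_on \<pi> (c' ` smooth_E E ends H')"
    and new_edges: "\<pi> (c' None) \<noteq> c None"
  shows "o_colouring V E (incident E ends) \<sigma> (glued c (\<pi> \<circ> c'))"
  unfolding o_colouring_iff_o_vertex
proof
  fix u assume "u \<in> V"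
  have orient_u: "is_orientation E ends rot u (\<sigma> u)"
    using orient \<open>u \<in> V\<close> unfolding vertex_orientation_def by blast
  then have cells: "\<forall>C\<in>\<sigma> u. C \<subseteq> incident E ends u" using orientation_cells_incident by metis
  consider "u = v" | "u \<in> H" | "u \<in> H'" using \<open>u \<in> V\<close> sides_cover by auto
  then show "o_vertex (incident E ends) \<sigma> (glued c (\<pi> \<circ> c')) u"
  proof cases
    case 1
    have "\<forall>e\<in>edges_to E ends v H'. glued c (\<pi> \<circ> c') e = \<pi> (c' None)"
      using glued_on_cut_edges(2)[of c "\<pi> \<circ> c'"] by simp
    from cut_vertex_coloured[OF _ transverse glued_on_cut_edges(1) this new_edges[symmetric]]
    show ?thesis using orient_u 1 by simp
  next
    case 2
    have "\<forall>e\<in>E. (\<exists>b. ends e b \<in> H) \<longrightarrow>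
        glued c (\<pi> \<circ> c') e = id (c (smooth_map (edges_to E ends v H) e))"
      using glued_on_sides(1) by simp
    from side_vertex_coloured[OF col inj_on_id cells this 2] show ?thesis .
  next
    case 3
    have "\<forall>e\<in>E. (\<exists>b. ends e b \<in> H') \<longrightarrow>
        glued c (\<pi> \<circ> c') e = \<pi> (c' (smooth_map (edges_to E ends v H') e))"
      using glued_on_sides(2)[of c "\<pi> \<circ> c'"] by simp
    from cut_side.side_vertex_coloured[OF swapped col' inj cells this 3] show ?thesis .
  qed
qed

end

text \<open>Lemma 3.2.\<close>
theorem lemma3p2:
  fixes V :: "'v set" and E :: "'e set" and ends :: "'e \<Rightarrow> bool \<Rightarrow> 'v"
    and rot :: "'e \<times> bool \<Rightarrow> 'e \<times> bool" and \<sigma> :: "'v \<Rightarrow> 'e set set"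
    and v :: 'v and H1 H2 :: "'v set" and k :: nat
  assumes "plane_4reg V E ends rot"
    and "vertex_orientation V E ends rot \<sigma>"
    and "cut_vertex V E ends v"
    and "loops_at E ends v = {}"
    and "components_del V E ends v = {H1, H2}" and "H1 \<noteq> H2"
    and "transverse_cut E ends \<sigma> v H1 H2"
    and "k \<ge> 2"
    and "k_o_colourable k H1 (smooth_E E ends H1) (smooth_inc E ends v H1) (smooth_sigma E ends \<sigma> v H1)"
    and "k_o_colourable k H2 (smooth_E E ends H2) (smooth_inc E ends v H2) (smooth_sigma E ends \<sigma> v H2)"
  shows "k_o_colourable k V E (incident E ends) \<sigma>"
proof -
  have graph: "is_graph V E ends" and regular: "four_regular V E ends"
    using assms(1) unfolding plane_4reg_def by auto
  interpret cut_side V E ends v H1 H2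
    by (rule cut_side.intro) (use graph regular assms(3-6) in auto)
  obtain c1 :: "'e option \<Rightarrow> nat" where c1:
      "o_colouring H1 (smooth_E E ends H1) (smooth_inc E ends v H1) (smooth_sigma E ends \<sigma> v H1) c1"
      "card (c1 ` smooth_E E ends H1) \<le> k"
    using assms(9) unfolding k_o_colourable_def by blast
  obtain c2 :: "'e option \<Rightarrow> nat" where c2:
      "o_colouring H2 (smooth_E E ends H2) (smooth_inc E ends v H2) (smooth_sigma E ends \<sigma> v H2) c2"
      "card (c2 ` smooth_E E ends H2) \<le> k"
    using assms(10) unfolding k_o_colourable_def by blast
  have fin: "finite (smooth_E E ends H1)" "finite (smooth_E E ends H2)"
    using graph unfolding is_graph_def smooth_E_def by auto
  have new_edge: "c1 None \<in> c1 ` smooth_E E ends H1" by (simp add: smooth_E_def)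
  obtain \<pi> T where palette: "c1 ` smooth_E E ends H1 \<subseteq> T" "finite T" "card T \<le> k"
      "\<pi> ` c2 ` smooth_E E ends H2 \<subseteq> T" "inj_on \<pi> (c2 ` smooth_E E ends H2)" "\<pi> (c2 None) \<noteq> c1 None"
    using palette_merge[where \<beta> = "c2 None", OF finite_imageI[OF fin(1)] finite_imageI[OF fin(2)]
        c1(2) c2(2) assms(8) new_edge]
    by blast
  have "o_colouring V E (incident E ends) \<sigma> (glued c1 (\<pi> \<circ> c2))"
    using glued_o_colouring[OF assms(2,7) c1(1) c2(1) palette(5,6)] .
  moreover have "glued c1 (\<pi> \<circ> c2) ` E \<subseteq> T"
    using glued_colours[of c1 "\<pi> \<circ> c2"] palette(1,4) unfolding image_comp by blast
  ultimately show ?thesis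
    unfolding k_o_colourable_def using card_mono[OF palette(2)] palette(3) by (meson le_trans)
qed

end
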